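(* Let $n\ge 1$, let $t_1<\dots<t_n$ be real numbers, $t_0=-\infty$, $t_{n+1}=+\infty$, let $p_0,\dots,p_n>0$, and let $p=\sum_{j=0}^n p_j\chi_{I_j}$ where $I_0=(-\infty,t_1]$, $I_j=(t_j,t_{j+1}]$ for $1\le j\le n-1$, $I_n=(t_n,\infty)$. Put $q_k=p_k^{-1/2}$. Then there exist analytic functions $a_l^+,b_l^+$ ($0\le l\le n-1$) and $a_j^-,b_j^-$ ($1\le j\le n$) from $\mathbb{C}\setminus(-\infty,0]$ to $\mathbb{C}$ such that for every $z\in\mathbb{C}\setminus(-\infty,0]$ the functions $$\Phi^+(z,x)=\begin{cases}a_l^+(z)e^{iq_l\sqrt z x}+b_l^+(z)e^{-iq_l\sqrt z x}, & x\in I_l,\ 0\le l\le n-1,\\ e^{iq_n\sqrt z x}, & x\in I_n,\end{cases}$$ $$\Phi^-(z,x)=\begin{cases}e^{-iq_0\sqrt z x}, & x\in I_0,\\ a_j^-(z)e^{iq_j\sqrt z x}+b_j^-(z)e^{-iq_j\sqrt z x}, & x\in I_j,\ 1\le j\le n,\end{cases}$$ are solutions of $(\tau_p-z)f=0$ that depend analytically on $z\in\mathbb{C}\setminus(-\infty,0]$. If $\operatorname{Im}z>0$, then $(\Phi^+(z,\cdot),\Phi^-(z,\cdot))$ is a fundamental system of $(\tau_p-z)f=0$ such that $\Phi^+(z,\cdot)$ lies right and $\Phi^-(z,\cdot)$ lies left in $L^2(\mathbb{R})$. If $\operatorname{Im}z<0$, then $(\overline{\Phi^+(\bar z,\cdot)},\overline{\Phi^-(\bar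 z,\cdot)})$ is a fundamental system of $(\tau_p-z)f=0$ such that $\overline{\Phi^+(\bar z,\cdot)}$ lies right and $\overline{\Phi^-(\bar z,\cdot)}$ lies left in $L^2(\mathbb{R})$. Moreover, with $a_n^+=1$, $b_n^+=0$, $a_0^-=0$, $b_0^-=1$ and $$L_k(z)=\frac12\begin{bmatrix}\left(1+\frac{q_k}{q_{k-1}}\right)e^{it_k(q_{k-1}-q_k)\sqrt z} & \left(1-\frac{q_k}{q_{k-1}}\right)e^{-it_k(q_{k-1}+q_k)\sqrt z}\\ \left(1-\frac{q_k}{q_{k-1}}\right)e^{it_k(q_{k-1}+q_k)\sqrt z} & \left(1+\frac{q_k}{q_{k-1}}\right)e^{-it_k(q_{k-1}-q_k)\sqrt z}\end{bmatrix},\quad 1\le k\le n,$$ the coefficients satisfy the recursion relations $\begin{bmatrix}a_k^\pm(z)\\ b_k^\pm(z)\end{bmatrix}=L_k(z)\begin{bmatrix}a_{k-1}^\pm(z)\\ b_{k-1}^\pm(z)\end{bmatrix}$ (for all $k$ for which both sides are defined), and consequently the coefficients $a^\pm_k,b^\pm_k$ are almost periodic trigonometric polynomials in the variable $\sqrt z$, i.e. finite sums $\sum_m c_m e^{i\lambda_m\sqrt z}$ with $c_m\in\mathbb{C}$, $\lambda_m\in\mathbb{R}$.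
   Context: $\sqrt z$ denotes the principal square root: for $z=re^{i\theta}$ with $r>0$, $-\pi<\theta<\pi$, $\sqrt z=\sqrt r e^{i\theta/2}$. A solution of $(\tau_p-z)f=0$ is a function $f:\mathbb{R}\to\mathbb{C}$ such that $f$ and $pf'$ are locally absolutely continuous on $\mathbb{R}$ and $-(pf')'=zf$ almost everywhere. A function $f$ lies right (resp. left) in $L^2(\mathbb{R})$ if $f\in L^2(c,\infty)$ (resp. $f\in L^2(-\infty,c)$) for some $c\in\mathbb{R}$. *)

theory Defs
  imports "HOL-Analysis.Analysis"
begin

definition Iset :: "nat \<Rightarrow> (nat \<Rightarrow> real) \<Rightarrow> nat \<Rightarrow> real set" where
  "Iset n t j = (if j = 0 then {..t 1} else if j < n then {t j<..t (Suc j)} else {t n<..})"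

definition pstep :: "nat \<Rightarrow> (nat \<Rightarrow> real) \<Rightarrow> (nat \<Rightarrow> real) \<Rightarrow> real \<Rightarrow> real" where
  "pstep n t p x = (\<Sum>j\<le>n. p j * indicator (Iset n t j) x)"

definition qcoef :: "(nat \<Rightarrow> real) \<Rightarrow> nat \<Rightarrow> real" where
  "qcoef p k = p k powr (-1/2)"

definition abs_cont_on :: "real \<Rightarrow> real \<Rightarrow> (real \<Rightarrow> complex) \<Rightarrow> bool" where
  "abs_cont_on a b f \<longleftrightarrow>
     (\<forall>\<epsilon>>0. \<exists>\<delta>>0. \<forall>(N::nat) (u::nat \<Rightarrow> real) (v::nat \<Rightarrow> real).
        (\<forall>i<N. a \<le> u i \<and> u i \<le> v i \<and> v i \<le> b) \<and>
        (\<forall>i<N. \<forall>j<N. i \<noteq> j \<longrightarrow> v i \<le> u j \<or> v j \<le> u i) \<and>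
        (\<Sum>i<N. v i - u i) < \<delta>
        \<longrightarrow> (\<Sum>i<N. norm (f (v i) - f (u i))) < \<epsilon>)"

definition loc_abs_cont :: "(real \<Rightarrow> complex) \<Rightarrow> bool" where
  "loc_abs_cont f \<longleftrightarrow> (\<forall>a b. a \<le> b \<longrightarrow> abs_cont_on a b f)"

text \<open>f is a solution of (tau_p - z) f = 0: f and p f' locally absolutely continuous
  (g is the locally absolutely continuous representative of p f') and -(p f')' = z f a.e.\<close>
definition is_solution :: "(real \<Rightarrow> real) \<Rightarrow> complex \<Rightarrow> (real \<Rightarrow> complex) \<Rightarrow> bool" where
  "is_solution p z f \<longleftrightarrow> loc_abs_cont f \<and>
     (\<exists>g. loc_abs_cont g \<and>
        (AE x in lborel. \<exists>d. (f has_vector_derivative d) (at x) \<and> complex_of_real (p x) * d = g x) \<and>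
        (AE x in lborel. (g has_vector_derivative (- z * f x)) (at x)))"

definition fundamental_system :: "(real \<Rightarrow> real) \<Rightarrow> complex \<Rightarrow> (real \<Rightarrow> complex) \<Rightarrow> (real \<Rightarrow> complex) \<Rightarrow> bool" where
  "fundamental_system p z f g \<longleftrightarrow> is_solution p z f \<and> is_solution p z g \<and>
     (\<forall>c1 c2 :: complex. (\<forall>x. c1 * f x + c2 * g x = 0) \<longrightarrow> c1 = 0 \<and> c2 = 0)"

definition lies_right_L2 :: "(real \<Rightarrow> complex) \<Rightarrow> bool" where
  "lies_right_L2 f \<longleftrightarrow> (\<exists>c. set_borel_measurable lborel {c<..} f \<and>
      set_integrable lborel {c<..} (\<lambda>x. (norm (f x))\<^sup>2))"

definition lies_left_L2 :: "(real \<Rightarrow> complex) \<Rightarrow> bool" where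
  "lies_left_L2 f \<longleftrightarrow> (\<exists>c. set_borel_measurable lborel {..<c} f \<and>
      set_integrable lborel {..<c} (\<lambda>x. (norm (f x))\<^sup>2))"

definition slit :: "complex set" where
  "slit = - \<real>\<^sub>\<le>\<^sub>0"

definition Phi_plus :: "nat \<Rightarrow> (nat \<Rightarrow> real) \<Rightarrow> (nat \<Rightarrow> real) \<Rightarrow> (nat \<Rightarrow> complex \<Rightarrow> complex)
    \<Rightarrow> (nat \<Rightarrow> complex \<Rightarrow> complex) \<Rightarrow> complex \<Rightarrow> real \<Rightarrow> complex" where
  "Phi_plus n t q a b z x =
     (\<Sum>l<n. if x \<in> Iset n t l then
         a l z * exp (\<i> * of_real (q l) * csqrt z * of_real x)
       + b l z * exp (- \<i> * of_real (q l) * csqrt z * of_real x) else 0)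
     + (if x \<in> Iset n t n then exp (\<i> * of_real (q n) * csqrt z * of_real x) else 0)"

definition Phi_minus :: "nat \<Rightarrow> (nat \<Rightarrow> real) \<Rightarrow> (nat \<Rightarrow> real) \<Rightarrow> (nat \<Rightarrow> complex \<Rightarrow> complex)
    \<Rightarrow> (nat \<Rightarrow> complex \<Rightarrow> complex) \<Rightarrow> complex \<Rightarrow> real \<Rightarrow> complex" where
  "Phi_minus n t q a b z x =
     (if x \<in> Iset n t 0 then exp (- \<i> * of_real (q 0) * csqrt z * of_real x) else 0)
     + (\<Sum>j\<in>{1..n}. if x \<in> Iset n t j then
         a j z * exp (\<i> * of_real (q j) * csqrt z * of_real x)
       + b j z * exp (- \<i> * of_real (q j) * csqrt z * of_real x) else 0)"

definition Lmat :: "(nat \<Rightarrow> real) \<Rightarrow> (nat \<Rightarrow> real) \<Rightarrow> nat \<Rightarrow> complex \<Rightarrow> complex^2^2" where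
  "Lmat t q k z = (let qk = q k; ql = q (k - 1); r = complex_of_real (qk / ql); s = csqrt z; tk = t k in
     vector [
       vector [(1 / 2) * (1 + r) * exp (\<i> * of_real (tk * (ql - qk)) * s),
               (1 / 2) * (1 - r) * exp (- \<i> * of_real (tk * (ql + qk)) * s)],
       vector [(1 / 2) * (1 - r) * exp (\<i> * of_real (tk * (ql + qk)) * s),
               (1 / 2) * (1 + r) * exp (- \<i> * of_real (tk * (ql - qk)) * s)]])"

definition trig_poly_sqrt :: "(complex \<Rightarrow> complex) \<Rightarrow> bool" where
  "trig_poly_sqrt g \<longleftrightarrow> (\<exists>cs :: (complex \<times> real) list. \<forall>z\<in>slit.
      g z = (\<Sum>(c, l)\<leftarrow>cs. c * exp (\<i> * of_real l * csqrt z)))"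

end

theory Submission
  imports Defs
begin

text \<open>On each interval I_j the equation reads -p_j u'' = z u, with the solutions
  exp (+- i q_j sqrt z x). A function that is such a combination on every I_j solves
  (tau_p - z) f = 0 exactly when u and p u' are continuous at the jumps t_k; for the
  coefficients this is the recursion with the transfer matrix L_k(z), whose inverse is the
  transfer matrix with q_(k-1) and q_k exchanged. Starting from (0, 1) on I_0, resp. from
  (1, 0) on I_n and going backwards, gives Phi^- and Phi^+. Every step multiplies by
  exponentials exp (i lambda sqrt z), so the coefficients are trigonometric polynomials in
  sqrt z and hence analytic on the slit plane.

  For Im z > 0 we have Im (sqrt z) > 0, so the outer exponentials are square integrable.
  Along a solution u the flux Im (conj u * p u') has derivative -Im z |u|^2 <= 0. If Phi^-
  were a multiple c Phi^+, its flux would be positive to the right of t_n and negative to the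
  left of t_1; hence Phi^+ and Phi^- are independent. The case Im z < 0 follows by complex
  conjugation.\<close>

section \<open>Absolutely continuous functions and the flux\<close>

lemma abs_cont_on_lipschitz:
  assumes "B-lipschitz_on {a..b} f"
  shows "abs_cont_on a b f"
  unfolding abs_cont_on_def
proof (intro allI impI)
  fix \<epsilon> :: real assume "\<epsilon> > 0"
  have B: "0 \<le> B" using assms lipschitz_on_nonneg by blast
  show "\<exists>\<delta>>0. \<forall>(N::nat) u v. (\<forall>i<N. a \<le> u i \<and> u i \<le> v i \<and> v i \<le> b) \<and>
      (\<forall>i<N. \<forall>j<N. i \<noteq> j \<longrightarrow> v i \<le> u j \<or> v j \<le> u i) \<and> (\<Sum>i<N. v i - u i) < \<delta>
      \<longrightarrow> (\<Sum>i<N. norm (f (v i) - f (u i))) < \<epsilon>"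
  proof (intro exI[of _ "\<epsilon> / (B + 1)"] conjI allI impI)
    show "\<epsilon> / (B + 1) > 0" using \<open>\<epsilon> > 0\<close> B by simp
    fix N :: nat and u v :: "nat \<Rightarrow> real"
    assume "(\<forall>i<N. a \<le> u i \<and> u i \<le> v i \<and> v i \<le> b) \<and>
      (\<forall>i<N. \<forall>j<N. i \<noteq> j \<longrightarrow> v i \<le> u j \<or> v j \<le> u i) \<and> (\<Sum>i<N. v i - u i) < \<epsilon> / (B + 1)"
    then have uv: "\<And>i. i < N \<Longrightarrow> a \<le> u i \<and> u i \<le> v i \<and> v i \<le> b"
      and small: "(\<Sum>i<N. v i - u i) < \<epsilon> / (B + 1)" by auto
    have "(\<Sum>i<N. norm (f (v i) - f (u i))) \<le> (\<Sum>i<N. B * (v i - u i))"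
    proof (rule sum_mono)
      fix i assume "i \<in> {..<N}"
      with uv[of i] show "norm (f (v i) - f (u i)) \<le> B * (v i - u i)"
        using lipschitz_onD[OF assms, of "v i" "u i"] by (simp add: dist_norm)
    qed
    also have "\<dots> \<le> (B + 1) * (\<Sum>i<N. v i - u i)"
      unfolding sum_distrib_left[symmetric] using uv by (intro mult_right_mono sum_nonneg) auto
    also have "\<dots> < \<epsilon>"
      using small B by (simp add: field_simps)
    finally show "(\<Sum>i<N. norm (f (v i) - f (u i))) < \<epsilon>" .
  qed
qed

lemma loc_abs_cont_piecewise_differentiable:
  fixes f f' :: "real \<Rightarrow> complex"
  assumes "finite S" and "continuous_on UNIV f"
    and "\<And>x. x \<notin> S \<Longrightarrow> (f has_vector_derivative f' x) (at x)"
    and "\<And>a b. bounded (f' ` {a..b})"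
  shows "loc_abs_cont f"
  unfolding loc_abs_cont_def
proof (intro allI impI)
  fix a b :: real
  obtain B where B: "0 \<le> B" "\<And>x. x \<in> {a..b} \<Longrightarrow> norm (f' x) \<le> B"
    using assms(4)[of a b] by (metis bounded_pos image_eqI less_eq_real_def)
  have "B-lipschitz_on {a..b} f"
  proof (rule lipschitz_onI)
    fix x y assume "x \<in> {a..b}" "y \<in> {a..b}"
    have "norm (f v - f u) \<le> B * (v - u)" if "u \<le> v" "u \<in> {a..b}" "v \<in> {a..b}" for u v
    proof -
      have "(f' has_integral (f v - f u)) {u..v}"
        by (rule fundamental_theorem_of_calculus_strong[OF assms(1) \<open>u \<le> v\<close>])
          (use assms(2,3) in \<open>auto intro: continuous_on_subset\<close>)
      from has_integral_bound_real[OF B(1) assms(1) this] that B(2)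
      show ?thesis by simp
    qed
    from this[of x y] this[of y x] \<open>x \<in> {a..b}\<close> \<open>y \<in> {a..b}\<close> show "dist (f x) (f y) \<le> B * dist x y"
      by (cases "x \<le> y") (auto simp: dist_norm norm_minus_commute abs_real_def)
  qed (rule B(1))
  then show "abs_cont_on a b f" by (rule abs_cont_on_lipschitz)
qed

text \<open>Since P is real, the derivative of Im (cnj F * G) is -Im z * norm (F x)^2.\<close>

lemma Im_cnj_flux_antimono:
  fixes F G F' :: "real \<Rightarrow> complex" and P :: "real \<Rightarrow> real"
  assumes "finite S" and "continuous_on UNIV F" and "continuous_on UNIV G"
    and F': "\<And>x. x \<notin> S \<Longrightarrow> (F has_vector_derivative F' x) (at x)"
    and G': "\<And>x. x \<notin> S \<Longrightarrow> (G has_vector_derivative - z * F x) (at x)"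
    and flux: "\<And>x. x \<notin> S \<Longrightarrow> complex_of_real (P x) * F' x = G x"
    and "Im z \<ge> 0" and "x\<^sub>0 \<le> x\<^sub>1"
  shows "Im (cnj (F x\<^sub>1) * G x\<^sub>1) \<le> Im (cnj (F x\<^sub>0) * G x\<^sub>0)"
proof -
  let ?J = "\<lambda>x. Im (cnj (F x) * G x)"
  have J': "(?J has_vector_derivative - Im z * (cmod (F x))\<^sup>2) (at x)" if "x \<notin> S" for x
  proof -
    have "((\<lambda>x. cnj (F x) * G x) has_vector_derivative cnj (F x) * (- z * F x) + cnj (F' x) * G x) (at x)"
      by (intro has_vector_derivative_mult has_vector_derivative_cnj F' G' that)
    then have deriv: "(?J has_field_derivative Im (cnj (F x) * (- z * F x) + cnj (F' x) * G x)) (at x)"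
      by (rule has_field_derivative_Im)
    have kinetic: "cnj (F' x) * G x = of_real (P x * (cmod (F' x))\<^sup>2)"
      unfolding flux[OF that, symmetric] of_real_mult complex_norm_square by (simp add: mult_ac)
    have potential: "cnj (F x) * (- z * F x) = - z * of_real ((cmod (F x))\<^sup>2)"
      unfolding complex_norm_square by (simp add: mult_ac)
    have "Im (cnj (F x) * (- z * F x) + cnj (F' x) * G x) = - Im z * (cmod (F x))\<^sup>2"
      unfolding kinetic potential by simp
    with deriv show ?thesis
      unfolding has_real_derivative_iff_has_vector_derivative by simp
  qed
  have "((\<lambda>x. - Im z * (cmod (F x))\<^sup>2) has_integral (?J x\<^sub>1 - ?J x\<^sub>0)) {x\<^sub>0..x\<^sub>1}"
    by (rule fundamental_theorem_of_calculus_strong[OF \<open>finite S\<close> \<open>x\<^sub>0 \<le> x\<^sub>1\<close>])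
      (use J' assms(2,3) in \<open>auto intro!: continuous_intros intro: continuous_on_subset\<close>)
  from has_integral_le[OF this has_integral_0] \<open>Im z \<ge> 0\<close> show ?thesis by simp
qed

lemma Re_csqrt_pos:
  assumes "Im z > 0"
  shows "Re (csqrt z) > 0"
proof (rule ccontr)
  assume "\<not> Re (csqrt z) > 0"
  then have "Re (csqrt z) = 0" using Re_csqrt[of z] by linarith
  then have "Im ((csqrt z)\<^sup>2) = 0" by (simp only: Im_power2)
  with assms show False by simp
qed

lemma Im_csqrt_pos:
  assumes "Im z > 0"
  shows "Im (csqrt z) > 0"
proof -
  have "Im ((csqrt z)\<^sup>2) = 2 * Re (csqrt z) * Im (csqrt z)"
    by (rule Im_power2)
  then have "Im z = 2 * Re (csqrt z) * Im (csqrt z)"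
    by (simp only: power2_csqrt)
  with assms have "0 < (2 * Re (csqrt z)) * Im (csqrt z)" by linarith
  moreover have "0 < 2 * Re (csqrt z)" using Re_csqrt_pos[OF assms] by linarith
  ultimately show ?thesis by (rule zero_less_mult_pos)
qed

lemma Im_cnj_mult_ii_mult: "Im (cnj w * (of_real r * (\<i> * s * w))) = r * (cmod w)\<^sup>2 * Re s"
proof -
  have "cnj w * (of_real r * (\<i> * s * w)) = of_real (r * (cmod w)\<^sup>2) * (\<i> * s)"
    by (simp only: of_real_mult complex_norm_square mult_ac)
  also have "Im \<dots> = r * (cmod w)\<^sup>2 * Re s" by simp
  finally show ?thesis .
qed

section \<open>Conjugation and square integrability\<close>

lemma loc_abs_cont_cnj: "loc_abs_cont f \<Longrightarrow> loc_abs_cont (\<lambda>x. cnj (f x))"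
  unfolding loc_abs_cont_def abs_cont_on_def by (simp flip: complex_cnj_diff)

lemma is_solution_cnj:
  assumes "is_solution P z f"
  shows "is_solution P (cnj z) (\<lambda>x. cnj (f x))"
proof -
  from assms obtain g where g: "loc_abs_cont f" "loc_abs_cont g"
    "AE x in lborel. \<exists>d. (f has_vector_derivative d) (at x) \<and> complex_of_real (P x) * d = g x"
    "AE x in lborel. (g has_vector_derivative (- z * f x)) (at x)"
    unfolding is_solution_def by blast
  show ?thesis
    unfolding is_solution_def
  proof (intro conjI exI[of _ "\<lambda>x. cnj (g x)"])
    show "loc_abs_cont (\<lambda>x. cnj (f x))" "loc_abs_cont (\<lambda>x. cnj (g x))"
      using g(1,2) by (simp_all add: loc_abs_cont_cnj)
    show "AE x in lborel. \<exists>d. ((\<lambda>x. cnj (f x)) has_vector_derivative d) (at x) \<and>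
        complex_of_real (P x) * d = cnj (g x)"
      using g(3)
    proof eventually_elim
      case (elim x)
      then obtain d where "(f has_vector_derivative d) (at x)" "complex_of_real (P x) * d = g x"
        by blast
      moreover from arg_cong[OF this(2), of cnj] have "complex_of_real (P x) * cnj d = cnj (g x)"
        by simp
      ultimately show ?case
        by (intro exI[of _ "cnj d"]) (auto intro!: has_vector_derivative_cnj)
    qed
    show "AE x in lborel. ((\<lambda>x. cnj (g x)) has_vector_derivative - cnj z * cnj (f x)) (at x)"
      using g(4) by eventually_elim (drule has_vector_derivative_cnj, simp)
  qed
qed

lemma fundamental_system_cnj:
  assumes "fundamental_system P z f g"
  shows "fundamental_system P (cnj z) (\<lambda>x. cnj (f x)) (\<lambda>x. cnj (g x))"
  unfolding fundamental_system_def
proof (intro conjI allI impI)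
  show "is_solution P (cnj z) (\<lambda>x. cnj (f x))" "is_solution P (cnj z) (\<lambda>x. cnj (g x))"
    using assms is_solution_cnj unfolding fundamental_system_def by blast+
  fix c\<^sub>1 c\<^sub>2 :: complex
  assume "\<forall>x. c\<^sub>1 * cnj (f x) + c\<^sub>2 * cnj (g x) = 0"
  then have "\<forall>x. cnj c\<^sub>1 * f x + cnj c\<^sub>2 * g x = 0"
    by (metis complex_cnj_add complex_cnj_cnj complex_cnj_mult complex_cnj_zero)
  with assms show "c\<^sub>1 = 0" "c\<^sub>2 = 0"
    unfolding fundamental_system_def by (metis complex_cnj_zero_iff)+
qed

lemma borel_measurable_cnj: "g \<in> borel_measurable M \<Longrightarrow> (\<lambda>x. cnj (g x)) \<in> borel_measurable M"
  by (rule borel_measurable_continuous_on[of cnj]) (simp_all add: continuous_on_cnj[OF continuous_on_id])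

lemma lies_right_L2_cnj:
  assumes "lies_right_L2 f"
  shows "lies_right_L2 (\<lambda>x. cnj (f x))"
proof -
  obtain c where "set_borel_measurable lborel {c<..} f" "set_integrable lborel {c<..} (\<lambda>x. (norm (f x))\<^sup>2)"
    using assms unfolding lies_right_L2_def by blast
  then show ?thesis
    unfolding lies_right_L2_def set_borel_measurable_def
    by (intro exI[of _ c] conjI) (simp_all flip: complex_cnj_scaleR add: borel_measurable_cnj)
qed

lemma lies_left_L2_cnj:
  assumes "lies_left_L2 f"
  shows "lies_left_L2 (\<lambda>x. cnj (f x))"
proof -
  obtain c where "set_borel_measurable lborel {..<c} f" "set_integrable lborel {..<c} (\<lambda>x. (norm (f x))\<^sup>2)"
    using assms unfolding lies_left_L2_def by blast
  then show ?thesis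
    unfolding lies_left_L2_def set_borel_measurable_def
    by (intro exI[of _ c] conjI) (simp_all flip: complex_cnj_scaleR add: borel_measurable_cnj)
qed

lemma set_integrable_exp_Ioi:
  fixes a c :: real
  assumes "a > 0"
  shows "set_integrable lborel {c<..} (\<lambda>x. exp (- a * x))"
proof -
  have "(\<lambda>x. exp (- a * x)) absolutely_integrable_on {c..}"
    by (intro nonnegative_absolutely_integrable_1 integrable_on_exp_minus_to_infinity assms) auto
  moreover have "(\<lambda>x. indicator {c..} x *\<^sub>R exp (- a * x)) \<in> borel_measurable borel"
    by (intro borel_measurable_continuous_on_indicator) (auto intro!: continuous_intros)
  ultimately have "set_integrable lborel {c..} (\<lambda>x. exp (- a * x))"
    unfolding set_integrable_def by (simp add: integrable_completion)
  then show ?thesis by (rule set_integrable_subset) auto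
qed

lemma set_integrable_exp_Iio:
  fixes a c :: real
  assumes "a > 0"
  shows "set_integrable lborel {..<c} (\<lambda>x. exp (a * x))"
proof -
  have "integrable lborel (\<lambda>x. indicator {- c<..} (- x) *\<^sub>R exp (- a * - x))"
    using lborel_integrable_real_affine[OF set_integrable_exp_Ioi[OF assms, of "- c", unfolded set_integrable_def],
        where t=0 and c="-1"] by simp
  moreover have "(\<lambda>x. indicator {- c<..} (- x) *\<^sub>R exp (- a * - x)) = (\<lambda>x. indicator {..<c} x *\<^sub>R exp (a * x))"
    by (auto simp: fun_eq_iff split: split_indicator)
  ultimately show ?thesis
    unfolding set_integrable_def by simp
qed

lemma lies_right_L2_exp:
  assumes f: "\<And>x. x > c \<Longrightarrow> f x = exp (K * of_real x)" and "Re K < 0"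
  shows "lies_right_L2 f"
  unfolding lies_right_L2_def
proof (intro exI[of _ c] conjI)
  have "(\<lambda>x. indicator {c<..} x *\<^sub>R exp (K * of_real x)) \<in> borel_measurable borel"
    by (intro borel_measurable_continuous_on_indicator) (auto intro!: continuous_intros)
  moreover have "(\<lambda>x. indicator {c<..} x *\<^sub>R f x) = (\<lambda>x. indicator {c<..} x *\<^sub>R exp (K * of_real x))"
    using f by (auto simp: fun_eq_iff indicator_def)
  ultimately show "set_borel_measurable lborel {c<..} f"
    unfolding set_borel_measurable_def by simp
  have "(norm (f x))\<^sup>2 = exp (- (- 2 * Re K) * x)" if "x \<in> {c<..}" for x
    using f[of x] that by (simp add: power2_eq_square flip: exp_add)
  then have "set_integrable lborel {c<..} (\<lambda>x. (norm (f x))\<^sup>2) \<longleftrightarrow>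
      set_integrable lborel {c<..} (\<lambda>x. exp (- (- 2 * Re K) * x))"
    by (rule set_integrable_cong[OF refl refl])
  with set_integrable_exp_Ioi[of "- 2 * Re K" c] \<open>Re K < 0\<close>
  show "set_integrable lborel {c<..} (\<lambda>x. (norm (f x))\<^sup>2)" by simp
qed

lemma lies_left_L2_exp:
  assumes f: "\<And>x. x < c \<Longrightarrow> f x = exp (K * of_real x)" and "Re K > 0"
  shows "lies_left_L2 f"
  unfolding lies_left_L2_def
proof (intro exI[of _ c] conjI)
  have "(\<lambda>x. indicator {..<c} x *\<^sub>R exp (K * of_real x)) \<in> borel_measurable borel"
    by (intro borel_measurable_continuous_on_indicator) (auto intro!: continuous_intros)
  moreover have "(\<lambda>x. indicator {..<c} x *\<^sub>R f x) = (\<lambda>x. indicator {..<c} x *\<^sub>R exp (K * of_real x))"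
    using f by (auto simp: fun_eq_iff indicator_def)
  ultimately show "set_borel_measurable lborel {..<c} f"
    unfolding set_borel_measurable_def by simp
  have "(norm (f x))\<^sup>2 = exp ((2 * Re K) * x)" if "x \<in> {..<c}" for x
    using f[of x] that by (simp add: power2_eq_square flip: exp_add)
  then have "set_integrable lborel {..<c} (\<lambda>x. (norm (f x))\<^sup>2) \<longleftrightarrow>
      set_integrable lborel {..<c} (\<lambda>x. exp ((2 * Re K) * x))"
    by (rule set_integrable_cong[OF refl refl])
  with set_integrable_exp_Iio[of "2 * Re K" c] \<open>Re K > 0\<close>
  show "set_integrable lborel {..<c} (\<lambda>x. (norm (f x))\<^sup>2)" by simp
qed

section \<open>Exponential solutions and transfer matrices\<close>

text \<open>wave q s c is the general solution of -(1/q^2) u'' = s^2 u with coefficients c.\<close>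

definition wave :: "real \<Rightarrow> complex \<Rightarrow> complex \<times> complex \<Rightarrow> real \<Rightarrow> complex" where
  "wave q s c x = fst c * exp (\<i> * of_real q * s * of_real x) + snd c * exp (- \<i> * of_real q * s * of_real x)"

definition wave_deriv :: "real \<Rightarrow> complex \<Rightarrow> complex \<times> complex \<Rightarrow> real \<Rightarrow> complex" where
  "wave_deriv q s c x = \<i> * of_real q * s *
     (fst c * exp (\<i> * of_real q * s * of_real x) - snd c * exp (- \<i> * of_real q * s * of_real x))"

lemma has_vector_derivative_wave: "(wave q s c has_vector_derivative wave_deriv q s c x) (at x)"
proof -
  have "((\<lambda>w. fst c * exp (\<i> * of_real q * s * w) + snd c * exp (- \<i> * of_real q * s * w))
      has_field_derivative wave_deriv q s c x) (at (of_real x))"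
    by (auto intro!: derivative_eq_intros simp: wave_deriv_def algebra_simps)
  from has_vector_derivative_real_field[OF this] show ?thesis
    by (simp add: wave_def[abs_def])
qed

lemma has_vector_derivative_wave_deriv:
  "(wave_deriv q s c has_vector_derivative - (of_real q * s)\<^sup>2 * wave q s c x) (at x)"
proof -
  have "((\<lambda>w. \<i> * of_real q * s * (fst c * exp (\<i> * of_real q * s * w) - snd c * exp (- \<i> * of_real q * s * w)))
      has_field_derivative - (of_real q * s)\<^sup>2 * wave q s c x) (at (of_real x))"
    by (auto intro!: derivative_eq_intros simp: wave_def algebra_simps power2_eq_square)
  from has_vector_derivative_real_field[OF this] show ?thesis
    by (simp add: wave_deriv_def[abs_def])
qed

lemma continuous_on_wave: "continuous_on S (wave q s c)"
  unfolding wave_def[abs_def] by (intro continuous_intros)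

lemma continuous_on_wave_deriv: "continuous_on S (wave_deriv q s c)"
  unfolding wave_deriv_def[abs_def] by (intro continuous_intros)

text \<open>transfer tau q0 q1 s maps the coefficients of a wave with parameter q0 left of tau to
  those of the wave with parameter q1 right of tau that has the same value and the same flux
  (1/q^2) u' at tau.\<close>

definition transfer :: "real \<Rightarrow> real \<Rightarrow> real \<Rightarrow> complex \<Rightarrow> complex \<times> complex \<Rightarrow> complex \<times> complex" where
  "transfer \<tau> q\<^sub>0 q\<^sub>1 s c = (let r = complex_of_real (q\<^sub>1 / q\<^sub>0) in
     ((1 / 2) * (1 + r) * exp (\<i> * of_real (\<tau> * (q\<^sub>0 - q\<^sub>1)) * s) * fst c
        + (1 / 2) * (1 - r) * exp (- \<i> * of_real (\<tau> * (q\<^sub>0 + q\<^sub>1)) * s) * snd c,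
      (1 / 2) * (1 - r) * exp (\<i> * of_real (\<tau> * (q\<^sub>0 + q\<^sub>1)) * s) * fst c
        + (1 / 2) * (1 + r) * exp (- \<i> * of_real (\<tau> * (q\<^sub>0 - q\<^sub>1)) * s) * snd c))"

lemma Lmat_mult_vector:
  "Lmat t q k z *v vector [a, b] =
     vector [fst (transfer (t k) (q (k - 1)) (q k) (csqrt z) (a, b)),
             snd (transfer (t k) (q (k - 1)) (q k) (csqrt z) (a, b))]"
  unfolding Lmat_def transfer_def Let_def
  by (simp add: vec_eq_iff forall_2 matrix_vector_mult_def sum_2 algebra_simps)

lemma transfer_wave_exp_form:
  fixes \<tau> q\<^sub>0 q\<^sub>1 :: real and s :: complex
  defines "E \<equiv> \<lambda>q. exp (\<i> * of_real q * s * of_real \<tau>)"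
  shows "transfer \<tau> q\<^sub>0 q\<^sub>1 s (a, b) =
    (let r = complex_of_real (q\<^sub>1 / q\<^sub>0) in
      ((1 + r) / 2 * (E q\<^sub>0 / E q\<^sub>1) * a + (1 - r) / 2 / (E q\<^sub>0 * E q\<^sub>1) * b,
       (1 - r) / 2 * (E q\<^sub>0 * E q\<^sub>1) * a + (1 + r) / 2 * (E q\<^sub>1 / E q\<^sub>0) * b))"
    and "wave q s (a, b) \<tau> = a * E q + b / E q"
    and "wave_deriv q s (a, b) \<tau> = \<i> * of_real q * s * (a * E q - b / E q)"
proof -
  have "exp (\<i> * of_real (\<tau> * (q\<^sub>0 - q\<^sub>1)) * s) = E q\<^sub>0 / E q\<^sub>1"
    "exp (- \<i> * of_real (\<tau> * (q\<^sub>0 + q\<^sub>1)) * s) = 1 / (E q\<^sub>0 * E q\<^sub>1)"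
    "exp (\<i> * of_real (\<tau> * (q\<^sub>0 + q\<^sub>1)) * s) = E q\<^sub>0 * E q\<^sub>1"
    "exp (- \<i> * of_real (\<tau> * (q\<^sub>0 - q\<^sub>1)) * s) = E q\<^sub>1 / E q\<^sub>0"
    unfolding E_def by (simp_all add: field_simps flip: exp_add exp_diff)
  then show "transfer \<tau> q\<^sub>0 q\<^sub>1 s (a, b) = (let r = complex_of_real (q\<^sub>1 / q\<^sub>0) in
      ((1 + r) / 2 * (E q\<^sub>0 / E q\<^sub>1) * a + (1 - r) / 2 / (E q\<^sub>0 * E q\<^sub>1) * b,
       (1 - r) / 2 * (E q\<^sub>0 * E q\<^sub>1) * a + (1 + r) / 2 * (E q\<^sub>1 / E q\<^sub>0) * b))"
    by (simp add: transfer_def Let_def)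
  have "exp (- \<i> * of_real q * s * of_real \<tau>) = 1 / E q"
    unfolding E_def by (simp add: exp_minus divide_inverse)
  then show "wave q s (a, b) \<tau> = a * E q + b / E q"
    and "wave_deriv q s (a, b) \<tau> = \<i> * of_real q * s * (a * E q - b / E q)"
    by (simp_all add: wave_def wave_deriv_def E_def)
qed

lemma transfer_inverse:
  assumes "q\<^sub>0 \<noteq> 0" "q\<^sub>1 \<noteq> 0"
  shows "transfer \<tau> q\<^sub>1 q\<^sub>0 s (transfer \<tau> q\<^sub>0 q\<^sub>1 s c) = c"
proof -
  obtain a b where "c = (a, b)" by force
  moreover have "exp (\<i> * of_real q * s * of_real \<tau>) \<noteq> 0" for q by simp
  ultimately show ?thesis
    using assms by (simp add: transfer_wave_exp_form Let_def field_simps)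
qed

lemma wave_transfer:
  assumes "q\<^sub>0 \<noteq> 0"
  shows "wave q\<^sub>1 s (transfer \<tau> q\<^sub>0 q\<^sub>1 s c) \<tau> = wave q\<^sub>0 s c \<tau>"
proof -
  obtain a b where "c = (a, b)" by force
  moreover have "exp (\<i> * of_real q * s * of_real \<tau>) \<noteq> 0" for q by simp
  ultimately show ?thesis
    using assms by (simp add: transfer_wave_exp_form Let_def field_simps)
qed

lemma wave_deriv_transfer:
  assumes "q\<^sub>0 \<noteq> 0" "q\<^sub>1 \<noteq> 0"
  shows "of_real (1 / q\<^sub>1\<^sup>2) * wave_deriv q\<^sub>1 s (transfer \<tau> q\<^sub>0 q\<^sub>1 s c) \<tau>
       = of_real (1 / q\<^sub>0\<^sup>2) * wave_deriv q\<^sub>0 s c \<tau>"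
proof -
  obtain a b where "c = (a, b)" by force
  moreover have "exp (\<i> * of_real q * s * of_real \<tau>) \<noteq> 0" for q by simp
  ultimately show ?thesis
    using assms by (simp add: transfer_wave_exp_form Let_def field_simps power2_eq_square)
qed

section \<open>Trigonometric polynomials\<close>

definition trig_poly :: "(complex \<Rightarrow> complex) \<Rightarrow> bool" where
  "trig_poly g \<longleftrightarrow> (\<exists>cs :: (complex \<times> real) list. \<forall>s. g s = (\<Sum>(c, l)\<leftarrow>cs. c * exp (\<i> * of_real l * s)))"

lemma trig_poly_const: "trig_poly (\<lambda>s. c)"
  unfolding trig_poly_def by (rule exI[of _ "[(c, 0)]"]) simp

lemma trig_poly_add: "trig_poly f \<Longrightarrow> trig_poly g \<Longrightarrow> trig_poly (\<lambda>s. f s + g s)"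
  unfolding trig_poly_def
proof (elim exE)
  fix cs ds :: "(complex \<times> real) list"
  assume "\<forall>s. f s = (\<Sum>(c, l)\<leftarrow>cs. c * exp (\<i> * of_real l * s))"
    and "\<forall>s. g s = (\<Sum>(c, l)\<leftarrow>ds. c * exp (\<i> * of_real l * s))"
  then show "\<exists>es. \<forall>s. f s + g s = (\<Sum>(c, l)\<leftarrow>es. c * exp (\<i> * of_real l * s))"
    by (intro exI[of _ "cs @ ds"]) simp
qed

lemma trig_poly_mult_exp:
  assumes "trig_poly g"
  shows "trig_poly (\<lambda>s. c * exp (\<i> * of_real \<alpha> * s) * g s)"
proof -
  have shift: "c * exp (\<i> * of_real \<alpha> * s) * (\<Sum>(d, l)\<leftarrow>cs. d * exp (\<i> * of_real l * s)) =
      (\<Sum>(d, l)\<leftarrow>map (\<lambda>(d, l). (c * d, \<alpha> + l)) cs. d * exp (\<i> * of_real l * s))" for cs s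
    by (induction cs) (auto simp: algebra_simps exp_add)
  from assms obtain cs where "\<forall>s. g s = (\<Sum>(d, l)\<leftarrow>cs. d * exp (\<i> * of_real l * s))"
    unfolding trig_poly_def by blast
  then show ?thesis
    unfolding trig_poly_def by (intro exI[of _ "map (\<lambda>(d, l). (c * d, \<alpha> + l)) cs"]) (simp add: shift)
qed

lemma trig_poly_mult_exp_minus:
  "trig_poly g \<Longrightarrow> trig_poly (\<lambda>s. c * exp (- \<i> * of_real \<alpha> * s) * g s)"
  using trig_poly_mult_exp[of g c "- \<alpha>"] by simp

lemma analytic_on_trig_poly:
  assumes "trig_poly g"
  shows "g analytic_on S"
proof -
  obtain cs where "g = (\<lambda>s. \<Sum>(c, l)\<leftarrow>cs. c * exp (\<i> * of_real l * s))"
    using assms unfolding trig_poly_def by blast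
  moreover have "(\<lambda>s. \<Sum>(c, l)\<leftarrow>cs. c * exp (\<i> * of_real l * s)) analytic_on S"
    by (induction cs) (auto intro!: analytic_intros)
  ultimately show ?thesis by simp
qed

lemma trig_poly_sqrt_trig_poly: "trig_poly g \<Longrightarrow> trig_poly_sqrt (\<lambda>z. g (csqrt z))"
  unfolding trig_poly_def trig_poly_sqrt_def by blast

lemma analytic_on_slit_trig_poly: "trig_poly g \<Longrightarrow> (\<lambda>z. g (csqrt z)) analytic_on slit"
  using analytic_on_compose[OF analytic_on_csqrt analytic_on_trig_poly, of g]
  by (simp add: slit_def o_def)

lemma trig_poly_transfer:
  assumes "trig_poly (\<lambda>s. fst (c s))" "trig_poly (\<lambda>s. snd (c s))"
  shows "trig_poly (\<lambda>s. fst (transfer \<tau> q\<^sub>0 q\<^sub>1 s (c s)))" "trig_poly (\<lambda>s. snd (transfer \<tau> q\<^sub>0 q\<^sub>1 s (c s)))"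
  unfolding transfer_def Let_def fst_conv snd_conv
  by (intro trig_poly_add trig_poly_mult_exp trig_poly_mult_exp_minus assms)+

lemma trig_poly_wave:
  assumes "trig_poly (\<lambda>s. fst (c s))" "trig_poly (\<lambda>s. snd (c s))"
  shows "trig_poly (\<lambda>s. wave q s (c s) x)"
proof -
  have "wave q s (c s) x = 1 * exp (\<i> * of_real (q * x) * s) * fst (c s)
      + 1 * exp (- \<i> * of_real (q * x) * s) * snd (c s)" for s
    by (simp add: wave_def algebra_simps)
  then show ?thesis
    by (simp only:) (intro trig_poly_add trig_poly_mult_exp trig_poly_mult_exp_minus assms)
qed

section \<open>Solutions for a step coefficient\<close>

locale step_coefficient =
  fixes n :: nat and t :: "nat \<Rightarrow> real" and p :: "nat \<Rightarrow> real"
  assumes n_ge_1: "n \<ge> 1"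
    and t_mono: "\<And>j. 1 \<le> j \<Longrightarrow> j < n \<Longrightarrow> t j < t (Suc j)"
    and p_pos: "\<And>j. j \<le> n \<Longrightarrow> p j > 0"
begin

abbreviation q :: "nat \<Rightarrow> real" where "q \<equiv> qcoef p"

lemma q_pos: "j \<le> n \<Longrightarrow> q j > 0"
  using p_pos[of j] by (simp add: qcoef_def)

lemma p_eq_inverse_q_square: "j \<le> n \<Longrightarrow> p j = 1 / (q j)\<^sup>2"
  using p_pos[of j] by (simp add: qcoef_def power2_eq_square flip: powr_add)

lemma t_less: "1 \<le> i \<Longrightarrow> i < j \<Longrightarrow> j \<le> n \<Longrightarrow> t i < t j"
proof (induction j rule: less_induct)
  case (less j)
  then obtain k where k: "j = Suc k" "i \<le> k" by (cases j) auto
  show ?case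
  proof (cases "i = k")
    case False
    then have "t i < t k" using less k by simp
    also have "t k < t j" using t_mono[of k] less k by simp
    finally show ?thesis .
  qed (use t_mono[of i] less k in simp)
qed

definition idx :: "real \<Rightarrow> nat" where
  "idx x = Max (insert 0 {j\<in>{1..n}. t j < x})"

lemma idx_le: "idx x \<le> n"
  unfolding idx_def by (subst Max_le_iff) auto

lemma in_Iset_idx: "x \<in> Iset n t (idx x)"
proof -
  let ?S = "insert 0 {j\<in>{1..n}. t j < x}"
  have fin: "finite ?S" by simp
  have "idx x \<in> ?S" unfolding idx_def by (rule Max_in[OF fin]) simp
  then have mem: "0 < idx x \<Longrightarrow> t (idx x) < x" by auto
  have ub: "j \<in> ?S \<Longrightarrow> j \<le> idx x" for j unfolding idx_def by (rule Max_ge[OF fin])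
  consider "idx x = 0" | "0 < idx x" "idx x < n" | "idx x = n" "0 < idx x"
    using idx_le[of x] n_ge_1 by linarith
  then show ?thesis
  proof cases
    case 1
    with ub[of 1] n_ge_1 show ?thesis by (force simp: Iset_def)
  next
    case 2
    with mem ub[of "Suc (idx x)"] show ?thesis by (force simp: Iset_def)
  next
    case 3
    with mem show ?thesis by (auto simp: Iset_def)
  qed
qed

lemma Iset_disjoint:
  assumes "x \<in> Iset n t i" "x \<in> Iset n t j" "i < j" "j \<le> n"
  shows False
proof -
  have "x \<le> t (Suc i)" "t j < x" using assms by (auto simp: Iset_def split: if_splits)
  moreover have "t (Suc i) \<le> t j"
    using t_less[of "Suc i" j] assms by (cases "Suc i = j") auto
  ultimately show False by simp
qed

lemma Iset_iff_idx: "j \<le> n \<Longrightarrow> x \<in> Iset n t j \<longleftrightarrow> j = idx x"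
  using Iset_disjoint[of x j "idx x"] Iset_disjoint[of x "idx x" j] in_Iset_idx[of x] idx_le[of x]
  by (cases j "idx x" rule: linorder_cases) auto

lemma sum_Iset: "(\<Sum>j\<le>n. if x \<in> Iset n t j then h j else 0) = h (idx x)"
  using idx_le[of x] by (simp add: Iset_iff_idx if_distrib cong: if_cong)

lemma pstep_eq: "pstep n t p x = p (idx x)"
proof -
  have "pstep n t p x = (\<Sum>j\<le>n. if x \<in> Iset n t j then p j else 0)"
    unfolding pstep_def by (rule sum.cong) (auto simp: indicator_def)
  then show ?thesis by (simp add: sum_Iset)
qed

lemma idx_eq_n: "t n < x \<Longrightarrow> idx x = n"
  using Iset_iff_idx[of n x] n_ge_1 by (simp add: Iset_def)

lemma idx_eq_0: "x \<le> t 1 \<Longrightarrow> idx x = 0"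
  using Iset_iff_idx[of 0 x] by (simp add: Iset_def)

definition jumps :: "real set" where
  "jumps = t ` {1..n}"

lemma finite_jumps: "finite jumps"
  by (simp add: jumps_def)

lemma interior_Iset_idx: "x \<notin> jumps \<Longrightarrow> x \<in> interior (Iset n t (idx x))"
  using in_Iset_idx[of x] idx_le[of x] n_ge_1
  by (auto simp: Iset_def jumps_def interior_open split: if_splits)

lemma closure_Iset_minus_Iset:
  assumes "j \<le> n" "y \<in> closure (Iset n t j)" "y \<notin> Iset n t j"
  shows "1 \<le> j \<and> y = t j"
proof -
  have "j < n \<Longrightarrow> 0 < j \<Longrightarrow> t j < t (Suc j)" using t_mono[of j] by simp
  with assms show ?thesis
    by (auto simp: Iset_def closure_closed split: if_splits)
qed

lemma piecewise_eq_on_closure: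
  assumes match: "\<And>k. k \<in> {1..n} \<Longrightarrow> h (k - 1) (t k) = h k (t k)"
    and "j \<le> n" "y \<in> closure (Iset n t j)"
  shows "h (idx y) y = h j y"
proof (cases "y \<in> Iset n t j")
  case True
  then show ?thesis using Iset_iff_idx \<open>j \<le> n\<close> by simp
next
  case False
  with closure_Iset_minus_Iset assms(2,3) have j: "1 \<le> j" "y = t j" by blast+
  have "t j \<in> Iset n t (j - 1)"
    using j t_less[of "j - 1" j] \<open>j \<le> n\<close> by (auto simp: Iset_def)
  then have "idx y = j - 1" using Iset_iff_idx[of "j - 1"] j \<open>j \<le> n\<close> by auto
  then show ?thesis using match[of j] j \<open>j \<le> n\<close> by simp
qed

lemma continuous_on_piecewise:
  assumes "\<And>j. continuous_on UNIV (h j)"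
    and "\<And>k. k \<in> {1..n} \<Longrightarrow> h (k - 1) (t k) = h k (t k)"
  shows "continuous_on UNIV (\<lambda>x. h (idx x) x)"
proof -
  have "UNIV = (\<Union>j\<in>{..n}. closure (Iset n t j))"
  proof (intro set_eqI iffI)
    fix x :: real
    show "x \<in> (\<Union>j\<in>{..n}. closure (Iset n t j))"
      using in_Iset_idx[of x] idx_le[of x] closure_subset[of "Iset n t (idx x)"] by blast
  qed simp
  also have "continuous_on \<dots> (\<lambda>x. h (idx x) x)"
  proof (rule continuous_on_closed_Union)
    fix j assume "j \<in> {..n}"
    have "continuous_on (closure (Iset n t j)) (h j)"
      using assms(1) by (rule continuous_on_subset) simp
    then show "continuous_on (closure (Iset n t j)) (\<lambda>x. h (idx x) x)"
      by (rule continuous_on_eq) (use piecewise_eq_on_closure[OF assms(2)] \<open>j \<in> {..n}\<close> in simp)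
  qed auto
  finally show ?thesis .
qed

lemma has_vector_derivative_piecewise:
  assumes "\<And>j x. (h j has_vector_derivative h' j x) (at x)" and "x \<notin> jumps"
  shows "((\<lambda>x. h (idx x) x) has_vector_derivative h' (idx x) x) (at x)"
proof (rule has_vector_derivative_transform_within_open[OF assms(1) open_interior])
  show "x \<in> interior (Iset n t (idx x))" using interior_Iset_idx[OF assms(2)] .
  fix y assume "y \<in> interior (Iset n t (idx x))"
  then have "idx y = idx x" using interior_subset Iset_iff_idx[OF idx_le] by (metis subsetD)
  then show "h (idx x) y = h (idx y) y" by simp
qed

lemma bounded_piecewise:
  assumes "\<And>j. continuous_on UNIV (h j)"
  shows "bounded ((\<lambda>x. h (idx x) x) ` {a..b})"
proof (rule bounded_subset)
  show "bounded (\<Union>j\<in>{..n}. h j ` {a..b})"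
    using assms by (intro bounded_UN ballI compact_imp_bounded compact_continuous_image)
      (auto intro: continuous_on_subset)
  show "(\<lambda>x. h (idx x) x) ` {a..b} \<subseteq> (\<Union>j\<in>{..n}. h j ` {a..b})"
    using idx_le by blast
qed

definition transfer_chain :: "complex \<Rightarrow> (nat \<Rightarrow> complex \<times> complex) \<Rightarrow> bool" where
  "transfer_chain s c \<longleftrightarrow> (\<forall>k\<in>{1..n}. c k = transfer (t k) (q (k - 1)) (q k) s (c (k - 1)))"

definition glued_wave :: "complex \<Rightarrow> (nat \<Rightarrow> complex \<times> complex) \<Rightarrow> real \<Rightarrow> complex" where
  "glued_wave s c x = wave (q (idx x)) s (c (idx x)) x"

definition glued_flux :: "complex \<Rightarrow> (nat \<Rightarrow> complex \<times> complex) \<Rightarrow> real \<Rightarrow> complex" where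
  "glued_flux s c x = of_real (p (idx x)) * wave_deriv (q (idx x)) s (c (idx x)) x"

lemma transfer_chain_matching:
  assumes "transfer_chain s c" and k: "k \<in> {1..n}"
  shows "wave (q (k - 1)) s (c (k - 1)) (t k) = wave (q k) s (c k) (t k)"
    and "of_real (p (k - 1)) * wave_deriv (q (k - 1)) s (c (k - 1)) (t k)
       = of_real (p k) * wave_deriv (q k) s (c k) (t k)"
proof -
  have c: "c k = transfer (t k) (q (k - 1)) (q k) s (c (k - 1))"
    using assms unfolding transfer_chain_def by blast
  have q: "q (k - 1) \<noteq> 0" "q k \<noteq> 0" using q_pos[of k] q_pos[of "k - 1"] k by force+
  show "wave (q (k - 1)) s (c (k - 1)) (t k) = wave (q k) s (c k) (t k)"
    unfolding c wave_transfer[OF q(1)] ..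
  show "of_real (p (k - 1)) * wave_deriv (q (k - 1)) s (c (k - 1)) (t k)
      = of_real (p k) * wave_deriv (q k) s (c k) (t k)"
  proof -
    have "p (k - 1) = 1 / (q (k - 1))\<^sup>2" "p k = 1 / (q k)\<^sup>2"
      using k by (auto intro: p_eq_inverse_q_square)
    then show ?thesis unfolding c by (simp only: wave_deriv_transfer[OF q])
  qed
qed

lemma continuous_on_glued_wave:
  assumes "transfer_chain s c"
  shows "continuous_on UNIV (glued_wave s c)"
  unfolding glued_wave_def
  by (rule continuous_on_piecewise[where h="\<lambda>j. wave (q j) s (c j)"])
    (rule continuous_on_wave, rule transfer_chain_matching(1)[OF assms])

lemma continuous_on_glued_flux:
  assumes "transfer_chain s c"
  shows "continuous_on UNIV (glued_flux s c)"
  unfolding glued_flux_def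
  by (rule continuous_on_piecewise[where h="\<lambda>j x. of_real (p j) * wave_deriv (q j) s (c j) x"])
    (intro continuous_intros continuous_on_wave_deriv, rule transfer_chain_matching(2)[OF assms])

lemma has_vector_derivative_glued_wave:
  "x \<notin> jumps \<Longrightarrow> (glued_wave s c has_vector_derivative wave_deriv (q (idx x)) s (c (idx x)) x) (at x)"
  unfolding glued_wave_def[abs_def]
  by (rule has_vector_derivative_piecewise[where h="\<lambda>j. wave (q j) s (c j)"])
    (simp_all add: has_vector_derivative_wave)

lemma has_vector_derivative_glued_flux:
  assumes "s\<^sup>2 = z" "x \<notin> jumps"
  shows "(glued_flux s c has_vector_derivative - z * glued_wave s c x) (at x)"
proof -
  have "(glued_flux s c has_vector_derivative
      of_real (p (idx x)) * (- (of_real (q (idx x)) * s)\<^sup>2 * wave (q (idx x)) s (c (idx x)) x)) (at x)"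
    unfolding glued_flux_def[abs_def]
    by (rule has_vector_derivative_piecewise[where h="\<lambda>j x. of_real (p j) * wave_deriv (q j) s (c j) x"
          and h'="\<lambda>j x. of_real (p j) * (- (of_real (q j) * s)\<^sup>2 * wave (q j) s (c j) x)"])
      (rule has_vector_derivative_mult_right[OF has_vector_derivative_wave_deriv], rule assms(2))
  moreover have "of_real (p (idx x)) * (- (of_real (q (idx x)) * s)\<^sup>2) = - z"
    using q_pos[OF idx_le, of x] assms(1)
    by (simp add: p_eq_inverse_q_square[OF idx_le] power_mult_distrib field_simps)
  ultimately show ?thesis
    by (simp add: glued_wave_def mult.assoc[symmetric])
qed

lemma pstep_mult_deriv_glued_wave:
  "of_real (pstep n t p x) * wave_deriv (q (idx x)) s (c (idx x)) x = glued_flux s c x"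
  by (simp add: pstep_eq glued_flux_def)

lemma AE_not_jumps: "AE x in lborel. x \<notin> jumps"
  by (rule AE_not_in[OF countable_imp_null_set_lborel[OF countable_finite[OF finite_jumps]]])

lemma is_solution_glued_wave:
  assumes "transfer_chain s c" "s\<^sup>2 = z"
  shows "is_solution (pstep n t p) z (glued_wave s c)"
  unfolding is_solution_def
proof (intro conjI exI[of _ "glued_flux s c"])
  show "loc_abs_cont (glued_wave s c)"
  proof (rule loc_abs_cont_piecewise_differentiable[OF finite_jumps])
    show "bounded ((\<lambda>x. wave_deriv (q (idx x)) s (c (idx x)) x) ` {a..b})" for a b
      by (rule bounded_piecewise[where h="\<lambda>j. wave_deriv (q j) s (c j)"])
        (rule continuous_on_wave_deriv)
  qed (use assms continuous_on_glued_wave has_vector_derivative_glued_wave in auto)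
  show "loc_abs_cont (glued_flux s c)"
  proof (rule loc_abs_cont_piecewise_differentiable[OF finite_jumps])
    show "bounded ((\<lambda>x. - z * glued_wave s c x) ` {a..b})" for a b
      unfolding glued_wave_def
      by (rule bounded_piecewise[where h="\<lambda>j x. - z * wave (q j) s (c j) x"])
        (intro continuous_intros continuous_on_wave)
  qed (use assms continuous_on_glued_flux has_vector_derivative_glued_flux in auto)
  show "AE x in lborel. \<exists>d. (glued_wave s c has_vector_derivative d) (at x) \<and>
      complex_of_real (pstep n t p x) * d = glued_flux s c x"
    using AE_not_jumps
    by eventually_elim (use has_vector_derivative_glued_wave pstep_mult_deriv_glued_wave in blast)
  show "AE x in lborel. (glued_flux s c has_vector_derivative - z * glued_wave s c x) (at x)"
    using AE_not_jumps by eventually_elim (rule has_vector_derivative_glued_flux[OF assms(2)])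
qed

lemma Im_cnj_glued_flux_antimono:
  assumes "transfer_chain s c" "s\<^sup>2 = z" "Im z \<ge> 0" "x\<^sub>0 \<le> x\<^sub>1"
  shows "Im (cnj (glued_wave s c x\<^sub>1) * glued_flux s c x\<^sub>1) \<le> Im (cnj (glued_wave s c x\<^sub>0) * glued_flux s c x\<^sub>0)"
  by (rule Im_cnj_flux_antimono[OF finite_jumps continuous_on_glued_wave[OF assms(1)]
        continuous_on_glued_flux[OF assms(1)] has_vector_derivative_glued_wave
        has_vector_derivative_glued_flux[OF assms(2)] pstep_mult_deriv_glued_wave assms(3,4)])

lemma glued_wave_right:
  assumes "c n = (1, 0)" "t n < x"
  shows "glued_wave s c x = exp (\<i> * of_real (q n) * s * of_real x)"
  using assms by (simp add: glued_wave_def wave_def idx_eq_n)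

lemma glued_wave_left:
  assumes "c 0 = (0, 1)" "x \<le> t 1"
  shows "glued_wave s c x = exp (- \<i> * of_real (q 0) * s * of_real x)"
  using assms by (simp add: glued_wave_def wave_def idx_eq_0)

lemma Im_cnj_glued_flux_left_neg:
  assumes "c 0 = (0, 1)" "Re s > 0" "x \<le> t 1"
  shows "Im (cnj (glued_wave s c x) * glued_flux s c x) < 0"
proof -
  define E where "E = exp (- \<i> * of_real (q 0) * s * of_real x)"
  have wave: "glued_wave s c x = E"
    using assms by (simp add: glued_wave_left E_def)
  have flux: "glued_flux s c x = of_real (- (p 0 * q 0)) * (\<i> * s * E)"
    using assms by (simp add: glued_flux_def wave_deriv_def idx_eq_0 E_def)
  have "0 < p 0 * q 0 * (cmod E)\<^sup>2 * Re s"
    using p_pos[of 0] q_pos[of 0] \<open>Re s > 0\<close> by (simp add: E_def)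
  then show ?thesis
    unfolding wave flux Im_cnj_mult_ii_mult by simp
qed

lemma Im_cnj_glued_flux_right_pos:
  assumes proportional: "glued_wave s c = (\<lambda>x. d * glued_wave s c' x)"
    and "c' n = (1, 0)" "d \<noteq> 0" "Re s > 0" "t n < x"
  shows "Im (cnj (glued_wave s c x) * glued_flux s c x) > 0"
proof -
  define E where "E = exp (\<i> * of_real (q n) * s * of_real x)"
  have "x \<notin> jumps" using t_less[of _ n] \<open>t n < x\<close> by (force simp: jumps_def)
  have "((\<lambda>x. d * glued_wave s c' x) has_vector_derivative d * wave_deriv (q n) s (c' n) x) (at x)"
    using has_vector_derivative_glued_wave[OF \<open>x \<notin> jumps\<close>, of s c'] \<open>t n < x\<close>
    by (simp add: idx_eq_n has_vector_derivative_mult_right)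
  moreover have "((\<lambda>x. d * glued_wave s c' x) has_vector_derivative wave_deriv (q n) s (c n) x) (at x)"
    using has_vector_derivative_glued_wave[OF \<open>x \<notin> jumps\<close>, of s c] \<open>t n < x\<close>
    by (simp add: idx_eq_n proportional)
  ultimately have "wave_deriv (q n) s (c n) x = d * wave_deriv (q n) s (c' n) x"
    by (rule vector_derivative_unique_at[symmetric])
  then have "glued_flux s c x = of_real (p n) * (d * wave_deriv (q n) s (c' n) x)"
    using \<open>t n < x\<close> by (simp add: glued_flux_def idx_eq_n)
  also have "\<dots> = of_real (p n * q n) * (\<i> * s * (d * E))"
    using assms(2) by (simp add: wave_deriv_def E_def mult_ac)
  finally have flux: "glued_flux s c x = of_real (p n * q n) * (\<i> * s * (d * E))" .
  have wave: "glued_wave s c x = d * E"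
    unfolding proportional E_def using assms(2,5) by (simp add: glued_wave_right)
  have "0 < p n * q n * (cmod (d * E))\<^sup>2 * Re s"
    using p_pos[of n] q_pos[of n] \<open>d \<noteq> 0\<close> \<open>Re s > 0\<close> by (simp add: E_def)
  then show ?thesis
    unfolding wave flux Im_cnj_mult_ii_mult .
qed

lemma glued_waves_independent:
  assumes z: "Im z > 0"
    and plus: "transfer_chain (csqrt z) cp" "cp n = (1, 0)"
    and minus: "transfer_chain (csqrt z) cm" "cm 0 = (0, 1)"
    and dep: "\<And>x. a * glued_wave (csqrt z) cp x + b * glued_wave (csqrt z) cm x = 0"
  shows "a = 0 \<and> b = 0"
proof (cases "b = 0")
  case True
  with dep[of "t n + 1"] show ?thesis by (simp add: glued_wave_right plus(2))
next
  case False
  define s where "s = csqrt z"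
  define d where "d = - a / b"
  have "Re s > 0" unfolding s_def by (rule Re_csqrt_pos[OF z])
  have proportional: "glued_wave s cm = (\<lambda>x. d * glued_wave s cp x)"
  proof
    fix x
    from dep[of x] have "b * glued_wave s cm x = - a * glued_wave s cp x"
      unfolding s_def by (simp add: add_eq_0_iff)
    with False show "glued_wave s cm x = d * glued_wave s cp x"
      unfolding d_def by (simp add: field_simps)
  qed
  have "d \<noteq> 0"
    using fun_cong[OF proportional, of "t 1"] glued_wave_left[where c=cm and x="t 1" and s=s] minus(2)
    by force
  have "t 1 \<le> t n + 1" using t_less[of 1 n] n_ge_1 by (cases "n = 1") auto
  have "Im (cnj (glued_wave s cm (t n + 1)) * glued_flux s cm (t n + 1))
      \<le> Im (cnj (glued_wave s cm (t 1)) * glued_flux s cm (t 1))"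
    by (rule Im_cnj_glued_flux_antimono) (use minus(1) z \<open>t 1 \<le> t n + 1\<close> in \<open>auto simp: s_def\<close>)
  moreover have "Im (cnj (glued_wave s cm (t n + 1)) * glued_flux s cm (t n + 1)) > 0"
    by (rule Im_cnj_glued_flux_right_pos[OF proportional plus(2) \<open>d \<noteq> 0\<close> \<open>Re s > 0\<close>]) simp
  moreover have "Im (cnj (glued_wave s cm (t 1)) * glued_flux s cm (t 1)) < 0"
    by (rule Im_cnj_glued_flux_left_neg[where c=cm, OF minus(2) \<open>Re s > 0\<close> order_refl])
  ultimately show ?thesis by linarith
qed

primrec coeff_minus :: "complex \<Rightarrow> nat \<Rightarrow> complex \<times> complex" where
  "coeff_minus s 0 = (0, 1)"
| "coeff_minus s (Suc k) = transfer (t (Suc k)) (q k) (q (Suc k)) s (coeff_minus s k)"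

text \<open>coeff_plus_rev s m are the coefficients on I_(n-m): the right solution is built from I_n
  leftwards by the inverse transfer maps.\<close>

primrec coeff_plus_rev :: "complex \<Rightarrow> nat \<Rightarrow> complex \<times> complex" where
  "coeff_plus_rev s 0 = (1, 0)"
| "coeff_plus_rev s (Suc m) = transfer (t (n - m)) (q (n - m)) (q (n - Suc m)) s (coeff_plus_rev s m)"

definition coeff_plus :: "complex \<Rightarrow> nat \<Rightarrow> complex \<times> complex" where
  "coeff_plus s k = coeff_plus_rev s (n - k)"

lemma coeff_plus_n [simp]: "coeff_plus s n = (1, 0)"
  by (simp add: coeff_plus_def)

lemma transfer_chain_coeff_minus: "transfer_chain s (coeff_minus s)"
  unfolding transfer_chain_def
proof
  fix k assume "k \<in> {1..n}"
  then obtain j where "k = Suc j" by (cases k) auto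
  then show "coeff_minus s k = transfer (t k) (q (k - 1)) (q k) s (coeff_minus s (k - 1))"
    by simp
qed

lemma transfer_chain_coeff_plus: "transfer_chain s (coeff_plus s)"
  unfolding transfer_chain_def
proof
  fix k assume k: "k \<in> {1..n}"
  then have "n - (k - 1) = Suc (n - k)" "n - (n - k) = k" "n - Suc (n - k) = k - 1" by auto
  then have "coeff_plus s (k - 1) = transfer (t k) (q k) (q (k - 1)) s (coeff_plus s k)"
    by (simp add: coeff_plus_def)
  moreover have "q (k - 1) \<noteq> 0" "q k \<noteq> 0" using q_pos[of k] q_pos[of "k - 1"] k by force+
  ultimately show "coeff_plus s k = transfer (t k) (q (k - 1)) (q k) s (coeff_plus s (k - 1))"
    by (simp add: transfer_inverse)
qed

lemma trig_poly_coeff_minus: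
  "trig_poly (\<lambda>s. fst (coeff_minus s k)) \<and> trig_poly (\<lambda>s. snd (coeff_minus s k))"
  by (induction k) (simp_all add: trig_poly_const trig_poly_transfer)

lemma trig_poly_coeff_plus:
  "trig_poly (\<lambda>s. fst (coeff_plus s k)) \<and> trig_poly (\<lambda>s. snd (coeff_plus s k))"
proof -
  have "trig_poly (\<lambda>s. fst (coeff_plus_rev s m)) \<and> trig_poly (\<lambda>s. snd (coeff_plus_rev s m))" for m
    by (induction m) (simp_all add: trig_poly_const trig_poly_transfer)
  then show ?thesis by (simp add: coeff_plus_def)
qed

definition a_plus :: "nat \<Rightarrow> complex \<Rightarrow> complex" where
  "a_plus k z = fst (coeff_plus (csqrt z) k)"

definition b_plus :: "nat \<Rightarrow> complex \<Rightarrow> complex" where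
  "b_plus k z = snd (coeff_plus (csqrt z) k)"

definition a_minus :: "nat \<Rightarrow> complex \<Rightarrow> complex" where
  "a_minus k z = fst (coeff_minus (csqrt z) k)"

definition b_minus :: "nat \<Rightarrow> complex \<Rightarrow> complex" where
  "b_minus k z = snd (coeff_minus (csqrt z) k)"

lemma boundary_coefficients: "a_plus n z = 1" "b_plus n z = 0" "a_minus 0 z = 0" "b_minus 0 z = 1"
  by (simp_all add: a_plus_def b_plus_def a_minus_def b_minus_def)

lemma Phi_plus_eq_glued_wave:
  "Phi_plus n t q a_plus b_plus z = glued_wave (csqrt z) (coeff_plus (csqrt z))"
proof
  fix x
  have "Phi_plus n t q a_plus b_plus z x =
      (\<Sum>j<Suc n. if x \<in> Iset n t j then wave (q j) (csqrt z) (coeff_plus (csqrt z) j) x else 0)"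
    unfolding Phi_plus_def sum.lessThan_Suc wave_def a_plus_def b_plus_def by simp
  also have "\<dots> = glued_wave (csqrt z) (coeff_plus (csqrt z)) x"
    unfolding lessThan_Suc_atMost sum_Iset glued_wave_def ..
  finally show "Phi_plus n t q a_plus b_plus z x = glued_wave (csqrt z) (coeff_plus (csqrt z)) x" .
qed

lemma Phi_minus_eq_glued_wave:
  "Phi_minus n t q a_minus b_minus z = glued_wave (csqrt z) (coeff_minus (csqrt z))"
proof
  fix x
  have "Phi_minus n t q a_minus b_minus z x =
      (\<Sum>j\<le>n. if x \<in> Iset n t j then wave (q j) (csqrt z) (coeff_minus (csqrt z) j) x else 0)"
    unfolding Phi_minus_def atMost_atLeast0 sum.atLeast_Suc_atMost[OF le0] wave_def a_minus_def b_minus_def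
    by simp
  also have "\<dots> = glued_wave (csqrt z) (coeff_minus (csqrt z)) x"
    unfolding sum_Iset glued_wave_def ..
  finally show "Phi_minus n t q a_minus b_minus z x = glued_wave (csqrt z) (coeff_minus (csqrt z)) x" .
qed

lemma is_solution_Phi_plus: "is_solution (pstep n t p) z (Phi_plus n t q a_plus b_plus z)"
  unfolding Phi_plus_eq_glued_wave by (rule is_solution_glued_wave[OF transfer_chain_coeff_plus power2_csqrt])

lemma is_solution_Phi_minus: "is_solution (pstep n t p) z (Phi_minus n t q a_minus b_minus z)"
  unfolding Phi_minus_eq_glued_wave by (rule is_solution_glued_wave[OF transfer_chain_coeff_minus power2_csqrt])

lemma analytic_on_Phi_plus: "(\<lambda>z. Phi_plus n t q a_plus b_plus z x) analytic_on slit"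
  unfolding Phi_plus_eq_glued_wave glued_wave_def
  using trig_poly_coeff_plus by (intro analytic_on_slit_trig_poly trig_poly_wave) simp_all

lemma analytic_on_Phi_minus: "(\<lambda>z. Phi_minus n t q a_minus b_minus z x) analytic_on slit"
  unfolding Phi_minus_eq_glued_wave glued_wave_def
  using trig_poly_coeff_minus by (intro analytic_on_slit_trig_poly trig_poly_wave) simp_all

lemma fundamental_system_Phi:
  assumes "Im z > 0"
  shows "fundamental_system (pstep n t p) z (Phi_plus n t q a_plus b_plus z) (Phi_minus n t q a_minus b_minus z)"
  unfolding fundamental_system_def
proof (intro conjI allI impI)
  show "is_solution (pstep n t p) z (Phi_plus n t q a_plus b_plus z)"
    "is_solution (pstep n t p) z (Phi_minus n t q a_minus b_minus z)"
    by (rule is_solution_Phi_plus is_solution_Phi_minus)+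
  fix a b :: complex
  assume "\<forall>x. a * Phi_plus n t q a_plus b_plus z x + b * Phi_minus n t q a_minus b_minus z x = 0"
  then have "\<And>x. a * glued_wave (csqrt z) (coeff_plus (csqrt z)) x + b * glued_wave (csqrt z) (coeff_minus (csqrt z)) x = 0"
    by (simp only: Phi_plus_eq_glued_wave Phi_minus_eq_glued_wave)
  from glued_waves_independent[OF assms transfer_chain_coeff_plus coeff_plus_n transfer_chain_coeff_minus _ this]
  show "a = 0" "b = 0" by simp_all
qed

lemma lies_right_L2_Phi_plus:
  assumes "Im z > 0"
  shows "lies_right_L2 (Phi_plus n t q a_plus b_plus z)"
proof (rule lies_right_L2_exp)
  show "Phi_plus n t q a_plus b_plus z x = exp (\<i> * of_real (q n) * csqrt z * of_real x)" if "t n < x" for x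
    using that by (simp add: Phi_plus_eq_glued_wave glued_wave_right)
  have "0 < q n * Im (csqrt z)" by (rule mult_pos_pos[OF q_pos[OF le_refl] Im_csqrt_pos[OF assms]])
  then show "Re (\<i> * of_real (q n) * csqrt z) < 0" by (simp del: csqrt.simps)
qed

lemma lies_left_L2_Phi_minus:
  assumes "Im z > 0"
  shows "lies_left_L2 (Phi_minus n t q a_minus b_minus z)"
proof (rule lies_left_L2_exp)
  show "Phi_minus n t q a_minus b_minus z x = exp (- \<i> * of_real (q 0) * csqrt z * of_real x)" if "x < t 1" for x
    using that by (simp add: Phi_minus_eq_glued_wave glued_wave_left)
  have "0 < q 0 * Im (csqrt z)" by (rule mult_pos_pos[OF q_pos[OF le0] Im_csqrt_pos[OF assms]])
  then show "Re (- \<i> * of_real (q 0) * csqrt z) > 0" by (simp del: csqrt.simps)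
qed

lemma Lmat_recursion:
  assumes "k \<in> {1..n}"
  shows "vector [a_plus k z, b_plus k z] = Lmat t q k z *v vector [a_plus (k - 1) z, b_plus (k - 1) z]"
    and "vector [a_minus k z, b_minus k z] = Lmat t q k z *v vector [a_minus (k - 1) z, b_minus (k - 1) z]"
  using assms transfer_chain_coeff_plus transfer_chain_coeff_minus
  by (simp_all add: Lmat_mult_vector transfer_chain_def a_plus_def b_plus_def a_minus_def b_minus_def)

lemma trig_poly_sqrt_coefficients:
  "trig_poly_sqrt (a_plus k) \<and> trig_poly_sqrt (b_plus k) \<and> trig_poly_sqrt (a_minus k) \<and> trig_poly_sqrt (b_minus k)"
  using trig_poly_coeff_plus[of k] trig_poly_coeff_minus[of k]
  unfolding a_plus_def[abs_def] b_plus_def[abs_def] a_minus_def[abs_def] b_minus_def[abs_def]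
  by (intro conjI trig_poly_sqrt_trig_poly) simp_all

lemma analytic_on_coefficients:
  "a_plus k analytic_on slit \<and> b_plus k analytic_on slit \<and> a_minus k analytic_on slit \<and> b_minus k analytic_on slit"
  using trig_poly_coeff_plus[of k] trig_poly_coeff_minus[of k]
  unfolding a_plus_def[abs_def] b_plus_def[abs_def] a_minus_def[abs_def] b_minus_def[abs_def]
  by (intro conjI analytic_on_slit_trig_poly) simp_all

end

theorem theorem3p1:
  fixes n :: nat and t :: "nat \<Rightarrow> real" and p :: "nat \<Rightarrow> real"
  assumes n_ge: "n \<ge> 1"
    and t_mono: "\<And>j. 1 \<le> j \<Longrightarrow> j < n \<Longrightarrow> t j < t (Suc j)"
    and p_pos: "\<And>j. j \<le> n \<Longrightarrow> p j > 0"
  shows "\<exists>ap bp am bm :: nat \<Rightarrow> complex \<Rightarrow> complex.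
    (\<forall>l<n. ap l analytic_on slit \<and> bp l analytic_on slit) \<and>
    (\<forall>j\<in>{1..n}. am j analytic_on slit \<and> bm j analytic_on slit) \<and>
    (\<forall>z\<in>slit. ap n z = 1 \<and> bp n z = 0 \<and> am 0 z = 0 \<and> bm 0 z = 1) \<and>
    (\<forall>z\<in>slit. is_solution (pstep n t p) z (Phi_plus n t (qcoef p) ap bp z) \<and>
               is_solution (pstep n t p) z (Phi_minus n t (qcoef p) am bm z)) \<and>
    (\<forall>x. (\<lambda>z. Phi_plus n t (qcoef p) ap bp z x) analytic_on slit \<and>
         (\<lambda>z. Phi_minus n t (qcoef p) am bm z x) analytic_on slit) \<and>
    (\<forall>z. Im z > 0 \<longrightarrow>
        fundamental_system (pstep n t p) z (Phi_plus n t (qcoef p) ap bp z) (Phi_minus n t (qcoef p) am bm z) \<and>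
        lies_right_L2 (Phi_plus n t (qcoef p) ap bp z) \<and>
        lies_left_L2 (Phi_minus n t (qcoef p) am bm z)) \<and>
    (\<forall>z. Im z < 0 \<longrightarrow>
        fundamental_system (pstep n t p) z
          (\<lambda>x. cnj (Phi_plus n t (qcoef p) ap bp (cnj z) x))
          (\<lambda>x. cnj (Phi_minus n t (qcoef p) am bm (cnj z) x)) \<and>
        lies_right_L2 (\<lambda>x. cnj (Phi_plus n t (qcoef p) ap bp (cnj z) x)) \<and>
        lies_left_L2 (\<lambda>x. cnj (Phi_minus n t (qcoef p) am bm (cnj z) x))) \<and>
    (\<forall>z\<in>slit. \<forall>k\<in>{1..n}.
        vector [ap k z, bp k z] = Lmat t (qcoef p) k z *v vector [ap (k - 1) z, bp (k - 1) z] \<and>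
        vector [am k z, bm k z] = Lmat t (qcoef p) k z *v vector [am (k - 1) z, bm (k - 1) z]) \<and>
    (\<forall>k\<le>n. trig_poly_sqrt (ap k) \<and> trig_poly_sqrt (bp k) \<and>
            trig_poly_sqrt (am k) \<and> trig_poly_sqrt (bm k))"
proof -
  interpret step_coefficient n t p
    using assms by unfold_locales auto
  have conjugate_half_plane:
    "fundamental_system (pstep n t p) z
       (\<lambda>x. cnj (Phi_plus n t q a_plus b_plus (cnj z) x)) (\<lambda>x. cnj (Phi_minus n t q a_minus b_minus (cnj z) x)) \<and>
     lies_right_L2 (\<lambda>x. cnj (Phi_plus n t q a_plus b_plus (cnj z) x)) \<and>
     lies_left_L2 (\<lambda>x. cnj (Phi_minus n t q a_minus b_minus (cnj z) x))" if "Im z < 0" for z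
    using fundamental_system_cnj[OF fundamental_system_Phi[of "cnj z"]]
      lies_right_L2_cnj[OF lies_right_L2_Phi_plus[of "cnj z"]]
      lies_left_L2_cnj[OF lies_left_L2_Phi_minus[of "cnj z"]] that
    by simp
  show ?thesis
    apply (rule exI[of _ a_plus], rule exI[of _ b_plus], rule exI[of _ a_minus], rule exI[of _ b_minus])
    by (intro conjI allI ballI impI)
      (simp_all add: analytic_on_coefficients is_solution_Phi_plus is_solution_Phi_minus
        analytic_on_Phi_plus analytic_on_Phi_minus fundamental_system_Phi lies_right_L2_Phi_plus
        lies_left_L2_Phi_minus conjugate_half_plane Lmat_recursion trig_poly_sqrt_coefficients
        boundary_coefficients)
qed

end
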